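(* The DS matching and pricing scheme described in the context is individually rational: $q_d\ge P_d(b_d)$ for every matched driver $d\in\mathcal{D}^*$ and $q_r\le P_r(\delta_r)$ for every matched rider $r\in\mathcal{R}^*$.
   Context: One decision epoch with finite sets $\mathcal{D}$ (drivers) and $\mathcal{R}$ (riders). Rider $r$ requests a trip of shortest-route length $h_r$ with destination $t_r$; $\tau_{dr}\ge0$ is the pick-up distance from driver $d$ to rider $r$, $\tau_d^{\min}=\min_{r}\tau_{dr}$, $\tau_r^{\min}=\min_d\tau_{dr}$. Public constants $\alpha,\beta>0$, and $f(t_r)$ is a given opportunity cost depending on the destination. Driver $d$ reports a bid $b_d$ and rider $r$ a bid $\delta_r$. For a potential match $(d,r)$ the valuations are $P_d(b_d)=\alpha h_r+b_d(\tau_{dr}-\tau_d^{\min})+f(t_r)$ and $P_r(\delta_r)=\beta h_r-\delta_r(\tau_{dr}-\tau_r^{\min})$, and the social welfare is $\sigma_{dr}=P_r-P_d$. Each potential match has a sensing gain $\zeta_{dr}\ge0$ not depending on bids. DS matching problem: maximize $\sum_{r,d}\zeta_{dr}x_{dr}$ subject to $\sum_r x_{dr}\le1$ $\forall d$, $\sum_d x_{dr}\le 1$ $\forall r$, $\sum_{r,d}\sigma_{dr}x_{dr}\ge0$, $x_{dr}\in\{0,1\}$; let $x^*$ be an optimal solution with value $U^*$, $\mathcal{D}^*,\mathcal{R}^*$ the sets of matched drivers and riders, and $V=\sum_{r,d}\sigma_{dr}x^*_{dr}$. For $d\in\mathcal{D}^*$ let $U^*_{d-}$ be the optimal value of the same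 problem with driver $d$ removed and $\Delta U_d=U^*-U^*_{d-}$; analogously $\Delta U_r=U^*-U^*_{r-}$ for $r\in\mathcal{R}^*$. Shares: $\lambda_d=\Delta U_d/(\sum_{d'\in\mathcal{D}^*}\Delta U_{d'}+\sum_{r'\in\mathcal{R}^*}\Delta U_{r'})$ and $\lambda_r=\Delta U_r/(\text{same denominator})$ (the denominator is taken to be nonzero so the shares are defined). Bonuses $\rho_d=V\lambda_d$, $\rho_r=V\lambda_r$. For a matched pair $(d,r)$, the platform pays driver $d$ the amount $q_d=P_d+\rho_d$ and charges rider $r$ the amount $q_r=P_r-\rho_r$. *)

theory Defs
  imports Complex_Main
begin

text \<open>One decision epoch: finite sets of drivers D and riders R.
  h r: trip length, t r: destination, tau d r: pick-up distance,
  f: opportunity cost of a destination, b d: driver bid, del r: rider bid.\<close>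

definition tau_min_d :: "('d \<Rightarrow> 'r \<Rightarrow> real) \<Rightarrow> 'r set \<Rightarrow> 'd \<Rightarrow> real" where
  "tau_min_d tau R d = Min ((\<lambda>r. tau d r) ` R)"

definition tau_min_r :: "('d \<Rightarrow> 'r \<Rightarrow> real) \<Rightarrow> 'd set \<Rightarrow> 'r \<Rightarrow> real" where
  "tau_min_r tau D r = Min ((\<lambda>d. tau d r) ` D)"

definition P_drv :: "real \<Rightarrow> ('r \<Rightarrow> real) \<Rightarrow> ('r \<Rightarrow> 'l) \<Rightarrow> ('l \<Rightarrow> real)
    \<Rightarrow> ('d \<Rightarrow> 'r \<Rightarrow> real) \<Rightarrow> 'r set \<Rightarrow> ('d \<Rightarrow> real) \<Rightarrow> 'd \<Rightarrow> 'r \<Rightarrow> real" where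
  "P_drv \<alpha> h t f tau R b d r = \<alpha> * h r + b d * (tau d r - tau_min_d tau R d) + f (t r)"

definition P_rid :: "real \<Rightarrow> ('r \<Rightarrow> real) \<Rightarrow> ('d \<Rightarrow> 'r \<Rightarrow> real) \<Rightarrow> 'd set
    \<Rightarrow> ('r \<Rightarrow> real) \<Rightarrow> 'd \<Rightarrow> 'r \<Rightarrow> real" where
  "P_rid \<beta> h tau D del d r = \<beta> * h r - del r * (tau d r - tau_min_r tau D r)"

definition ds_feasible :: "('d \<Rightarrow> 'r \<Rightarrow> real) \<Rightarrow> 'd set \<Rightarrow> 'r set \<Rightarrow> ('d \<Rightarrow> 'r \<Rightarrow> real) \<Rightarrow> bool" where
  "ds_feasible \<sigma> D' R' x \<longleftrightarrow>
     (\<forall>d\<in>D'. \<forall>r\<in>R'. x d r \<in> {0, 1}) \<and>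
     (\<forall>d\<in>D'. (\<Sum>r\<in>R'. x d r) \<le> 1) \<and>
     (\<forall>r\<in>R'. (\<Sum>d\<in>D'. x d r) \<le> 1) \<and>
     (\<Sum>r\<in>R'. \<Sum>d\<in>D'. \<sigma> d r * x d r) \<ge> 0"

definition ds_obj :: "('d \<Rightarrow> 'r \<Rightarrow> real) \<Rightarrow> 'd set \<Rightarrow> 'r set \<Rightarrow> ('d \<Rightarrow> 'r \<Rightarrow> real) \<Rightarrow> real" where
  "ds_obj \<zeta> D' R' x = (\<Sum>r\<in>R'. \<Sum>d\<in>D'. \<zeta> d r * x d r)"

definition ds_opt :: "('d \<Rightarrow> 'r \<Rightarrow> real) \<Rightarrow> ('d \<Rightarrow> 'r \<Rightarrow> real) \<Rightarrow> 'd set \<Rightarrow> 'r set \<Rightarrow> real" where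
  "ds_opt \<zeta> \<sigma> D' R' = Sup (ds_obj \<zeta> D' R' ` {x. ds_feasible \<sigma> D' R' x})"

definition ds_optimal :: "('d \<Rightarrow> 'r \<Rightarrow> real) \<Rightarrow> ('d \<Rightarrow> 'r \<Rightarrow> real) \<Rightarrow> 'd set \<Rightarrow> 'r set
    \<Rightarrow> ('d \<Rightarrow> 'r \<Rightarrow> real) \<Rightarrow> bool" where
  "ds_optimal \<zeta> \<sigma> D' R' x \<longleftrightarrow> ds_feasible \<sigma> D' R' x \<and>
     (\<forall>y. ds_feasible \<sigma> D' R' y \<longrightarrow> ds_obj \<zeta> D' R' y \<le> ds_obj \<zeta> D' R' x)"

end

theory Submission
  imports Defs
begin

text \<open>Both bonuses are V times a marginal contribution divided by the denominator.
  V is nonnegative because the optimal matching satisfies the welfare constraint, and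
  each marginal contribution U* - U*_{-i} is nonnegative because a feasible matching of
  the reduced market, extended by zero, is feasible for the full market with the same
  sensing gain; hence the denominator is positive and both bonuses are nonnegative.\<close>

definition extend_by_zero :: "'d set \<Rightarrow> 'r set \<Rightarrow> ('d \<Rightarrow> 'r \<Rightarrow> real) \<Rightarrow> 'd \<Rightarrow> 'r \<Rightarrow> real" where
  "extend_by_zero D' R' y d r = (if d \<in> D' \<and> r \<in> R' then y d r else 0)"

lemma sum_sum_extend_by_zero:
  fixes g y :: "'d \<Rightarrow> 'r \<Rightarrow> real"
  assumes "finite D" "finite R" "D' \<subseteq> D" "R' \<subseteq> R"
  shows "(\<Sum>r\<in>R. \<Sum>d\<in>D. g d r * extend_by_zero D' R' y d r) = (\<Sum>r\<in>R'. \<Sum>d\<in>D'. g d r * y d r)"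
  using assms unfolding extend_by_zero_def by (auto intro!: sum.mono_neutral_cong_right)

lemma ds_obj_extend_by_zero:
  assumes "finite D" "finite R" "D' \<subseteq> D" "R' \<subseteq> R"
  shows "ds_obj \<zeta> D R (extend_by_zero D' R' y) = ds_obj \<zeta> D' R' y"
  using sum_sum_extend_by_zero[OF assms] unfolding ds_obj_def .

lemma ds_feasible_extend_by_zero:
  assumes fin: "finite D" "finite R" and sub: "D' \<subseteq> D" "R' \<subseteq> R"
    and feas: "ds_feasible \<sigma> D' R' y"
  shows "ds_feasible \<sigma> D R (extend_by_zero D' R' y)"
proof -
  have row: "(\<Sum>r\<in>R. extend_by_zero D' R' y d r) = (if d \<in> D' then \<Sum>r\<in>R'. y d r else 0)" for d
    using fin sub unfolding extend_by_zero_def by (auto intro!: sum.mono_neutral_cong_right)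
  have col: "(\<Sum>d\<in>D. extend_by_zero D' R' y d r) = (if r \<in> R' then \<Sum>d\<in>D'. y d r else 0)" for r
    using fin sub unfolding extend_by_zero_def by (auto intro!: sum.mono_neutral_cong_right)
  show ?thesis
    using feas sum_sum_extend_by_zero[OF fin sub, of \<sigma> y]
    unfolding ds_feasible_def row col by (auto simp: extend_by_zero_def)
qed

lemma ds_opt_eq_obj_if_optimal:
  assumes "ds_optimal \<zeta> \<sigma> D R x"
  shows "ds_opt \<zeta> \<sigma> D R = ds_obj \<zeta> D R x"
  unfolding ds_opt_def
  by (rule cSup_eq_maximum) (use assms in \<open>auto simp: ds_optimal_def\<close>)

lemma ds_opt_le_subsets:
  assumes fin: "finite D" "finite R" and sub: "D' \<subseteq> D" "R' \<subseteq> R"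
    and opt: "ds_optimal \<zeta> \<sigma> D R x"
  shows "ds_opt \<zeta> \<sigma> D' R' \<le> ds_opt \<zeta> \<sigma> D R"
  unfolding ds_opt_eq_obj_if_optimal[OF opt] unfolding ds_opt_def
proof (rule cSup_least)
  have "ds_feasible \<sigma> D' R' (\<lambda>_ _. 0)" unfolding ds_feasible_def by simp
  then show "ds_obj \<zeta> D' R' ` {y. ds_feasible \<sigma> D' R' y} \<noteq> {}" by blast
next
  fix v assume "v \<in> ds_obj \<zeta> D' R' ` {y. ds_feasible \<sigma> D' R' y}"
  then obtain y where y: "ds_feasible \<sigma> D' R' y" and v: "v = ds_obj \<zeta> D' R' y" by blast
  have "ds_obj \<zeta> D R (extend_by_zero D' R' y) \<le> ds_obj \<zeta> D R x"
    using opt ds_feasible_extend_by_zero[OF fin sub y] unfolding ds_optimal_def by blast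
  then show "v \<le> ds_obj \<zeta> D R x"
    by (simp add: v ds_obj_extend_by_zero[OF fin sub])
qed

theorem proposition3:
  fixes D :: "'d set" and R :: "'r set"
    and h :: "'r \<Rightarrow> real" and t :: "'r \<Rightarrow> 'l" and f :: "'l \<Rightarrow> real"
    and tau :: "'d \<Rightarrow> 'r \<Rightarrow> real" and \<alpha> \<beta> :: real
    and b :: "'d \<Rightarrow> real" and del :: "'r \<Rightarrow> real"
    and \<zeta> :: "'d \<Rightarrow> 'r \<Rightarrow> real" and xs :: "'d \<Rightarrow> 'r \<Rightarrow> real"
  assumes "finite D" and "finite R"
    and "\<alpha> > 0" and "\<beta> > 0"
    and "\<forall>d\<in>D. \<forall>r\<in>R. tau d r \<ge> 0"
    and "\<forall>d\<in>D. \<forall>r\<in>R. \<zeta> d r \<ge> 0"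
  defines "Pd \<equiv> P_drv \<alpha> h t f tau R b"
    and "Pr \<equiv> P_rid \<beta> h tau D del"
  defines "\<sigma> \<equiv> (\<lambda>d r. Pr d r - Pd d r)"
  assumes opt: "ds_optimal \<zeta> \<sigma> D R xs"
  defines "Dstar \<equiv> {d\<in>D. \<exists>r\<in>R. xs d r = 1}"
    and "Rstar \<equiv> {r\<in>R. \<exists>d\<in>D. xs d r = 1}"
    and "V \<equiv> (\<Sum>r\<in>R. \<Sum>d\<in>D. \<sigma> d r * xs d r)"
  defines "dUd \<equiv> (\<lambda>d. ds_opt \<zeta> \<sigma> D R - ds_opt \<zeta> \<sigma> (D - {d}) R)"
    and "dUr \<equiv> (\<lambda>r. ds_opt \<zeta> \<sigma> D R - ds_opt \<zeta> \<sigma> D (R - {r}))"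
  defines "den \<equiv> (\<Sum>d'\<in>Dstar. dUd d') + (\<Sum>r'\<in>Rstar. dUr r')"
  assumes "den \<noteq> 0"
  defines "\<rho>d \<equiv> (\<lambda>d. V * (dUd d / den))"
    and "\<rho>r \<equiv> (\<lambda>r. V * (dUr r / den))"
  shows "\<forall>d\<in>D. \<forall>r\<in>R. xs d r = 1 \<longrightarrow>
           Pd d r + \<rho>d d \<ge> Pd d r \<and> Pr d r - \<rho>r r \<le> Pr d r"
proof -
  have "V \<ge> 0" using opt unfolding ds_optimal_def ds_feasible_def V_def by auto
  have dUd_nonneg: "dUd d \<ge> 0" for d
    using ds_opt_le_subsets[OF \<open>finite D\<close> \<open>finite R\<close> _ _ opt, of "D - {d}" R]
    unfolding dUd_def by auto
  have dUr_nonneg: "dUr r \<ge> 0" for r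
    using ds_opt_le_subsets[OF \<open>finite D\<close> \<open>finite R\<close> _ _ opt, of D "R - {r}"]
    unfolding dUr_def by auto
  have "den > 0"
    using \<open>den \<noteq> 0\<close> dUd_nonneg dUr_nonneg unfolding den_def
    by (simp add: add_nonneg_nonneg sum_nonneg order_less_le)
  then have "\<rho>d d \<ge> 0" "\<rho>r r \<ge> 0" for d r
    unfolding \<rho>d_def \<rho>r_def using \<open>V \<ge> 0\<close> dUd_nonneg dUr_nonneg by auto
  then show ?thesis by auto
qed

end
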